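(* Let $H$ be a Hilbert $C^*$-module, $Q\in\mathcal{L}(H)$ an idempotent and $U\in\mathcal{L}(H)$ a partial isometry. If $U^*UQ=QU^*U$, then $UQU^*$ is an idempotent and $m(UQU^* )=U\,m(Q)\,U^*$.
   Context: $H$ is a Hilbert module over a $C^*$-algebra, $\mathcal{L}(H)$ the adjointable operators. For $T$, $|T|=(T^*T)^{1/2}$, and $T^\dagger$ is the Moore–Penrose inverse (unique $X$ with $TXT=T$, $XTX=X$, $(TX)^*=TX$, $(XT)^*=XT$; exists iff $\mathcal{R}(T)$ closed). The matched projection of an idempotent $Q$ is the projection $m(Q)=\tfrac12(|Q^*|+Q^* )|Q^*|^\dagger(|Q^*|+I)^{-1}(|Q^*|+Q)$. *)

theory Defs
  imports Complex_Main
begin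

text \<open>Abstract unital C*-algebra (complex scalars, involution adj, C*-identity).
  The algebra L(H) of adjointable operators on a Hilbert C*-module is such an algebra.\<close>

class cstar_algebra = real_normed_algebra_1 + banach +
  fixes scaleC :: "complex \<Rightarrow> 'a \<Rightarrow> 'a"
    and adj :: "'a \<Rightarrow> 'a"
  assumes scaleC_add_right: "scaleC c (x + y) = scaleC c x + scaleC c y"
    and scaleC_add_left: "scaleC (c + d) x = scaleC c x + scaleC d x"
    and scaleC_scaleC: "scaleC c (scaleC d x) = scaleC (c * d) x"
    and scaleC_one: "scaleC 1 x = x"
    and scaleR_scaleC: "scaleR r x = scaleC (complex_of_real r) x"
    and norm_scaleC: "norm (scaleC c x) = cmod c * norm x"
    and scaleC_mult_left: "scaleC c x * y = scaleC c (x * y)"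
    and scaleC_mult_right: "x * scaleC c y = scaleC c (x * y)"
    and adj_adj: "adj (adj x) = x"
    and adj_add: "adj (x + y) = adj x + adj y"
    and adj_scaleC: "adj (scaleC c x) = scaleC (cnj c) (adj x)"
    and adj_mult: "adj (x * y) = adj y * adj x"
    and cstar_identity: "norm (adj x * x) = (norm x)\<^sup>2"

definition positive :: "'a::cstar_algebra \<Rightarrow> bool" where
  "positive a \<longleftrightarrow> (\<exists>b. a = adj b * b)"

definition csqrt :: "'a::cstar_algebra \<Rightarrow> 'a" where
  "csqrt a = (THE r. positive r \<and> r * r = a)"

definition cabs :: "'a::cstar_algebra \<Rightarrow> 'a" where
  "cabs t = csqrt (adj t * t)"

definition mp_inv :: "'a::cstar_algebra \<Rightarrow> 'a" where
  "mp_inv t = (THE x. t * x * t = t \<and> x * t * x = x \<and>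
                      adj (t * x) = t * x \<and> adj (x * t) = x * t)"

definition ainv :: "'a::cstar_algebra \<Rightarrow> 'a" where
  "ainv x = (THE y. x * y = 1 \<and> y * x = 1)"

definition idempotent :: "'a::cstar_algebra \<Rightarrow> bool" where
  "idempotent q \<longleftrightarrow> q * q = q"

definition projection :: "'a::cstar_algebra \<Rightarrow> bool" where
  "projection p \<longleftrightarrow> p * p = p \<and> adj p = p"

definition partial_isometry :: "'a::cstar_algebra \<Rightarrow> bool" where
  "partial_isometry u \<longleftrightarrow> projection (adj u * u)"

definition matched_proj :: "'a::cstar_algebra \<Rightarrow> 'a" where
  "matched_proj q = (1/2::real) *\<^sub>R
     ((cabs (adj q) + adj q) * mp_inv (cabs (adj q)) * ainv (cabs (adj q) + 1)
      * (cabs (adj q) + q))"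

end

theory Submission
  imports Defs "HOL-Computational_Algebra.Formal_Power_Series"
begin

text \<open>On elements commuting with the projection \<open>P = U\<^sup>*U\<close>, conjugation \<open>Z \<mapsto> U Z U\<^sup>*\<close> is
  multiplicative and preserves adjoints. The ingredients of \<open>m(Q)\<close> --- \<open>|Q\<^sup>*|\<close>, its Moore--Penrose
  inverse and \<open>(|Q\<^sup>*| + 1)\<^sup>-\<^sup>1\<close> --- all commute with \<open>P\<close> and are determined by algebraic identities,
  so conjugation carries them to the corresponding ingredients of \<open>m(U Q U\<^sup>*)\<close>. For idempotent \<open>Q\<close> the
  Moore--Penrose inverse of \<open>|Q\<^sup>*|\<close> is \<open>|Q\<^sup>*| (R\<^sup>2)\<^sup>-\<^sup>1\<close> with \<open>R = Q + Q\<^sup>* - 1\<close>.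

  The analytic input is that positive square roots in a C*-algebra exist and are unique: existence
  comes from the binomial series of \<open>\<surd>(1 - x)\<close>, uniqueness from the Fukamiya--Kelley--Vaught
  theorem that \<open>b\<^sup>* b\<close> has nonnegative spectrum.\<close>

section \<open>The binomial series of the square root\<close>

text \<open>Taylor coefficients of \<open>sqrt (1 - x)\<close> at \<open>0\<close>.\<close>

definition sqrt_coeff :: "nat \<Rightarrow> real" where
  "sqrt_coeff n = (-1) ^ n * ((1/2) gchoose n)"

lemma sqrt_coeff_0 [simp]: "sqrt_coeff 0 = 1"
  by (simp add: sqrt_coeff_def)

lemma sqrt_coeff_Suc: "sqrt_coeff (Suc n) = sqrt_coeff n * (of_nat n - 1/2) / of_nat (Suc n)"
proof -
  have "of_nat (Suc n) * ((1/2::real) gchoose (Suc n)) = (1/2 - of_nat n) * ((1/2) gchoose n)"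
    using gbinomial_mult_1[of "1/2::real" n] by (simp add: algebra_simps)
  then have g: "(1/2::real) gchoose (Suc n) = (1/2 - of_nat n) * ((1/2) gchoose n) / of_nat (Suc n)"
    by (simp add: field_simps del: of_nat_Suc)
  show ?thesis
    unfolding sqrt_coeff_def g by (simp add: field_simps del: of_nat_Suc)
qed

lemma sqrt_coeff_Suc_nonpos: "sqrt_coeff (Suc n) \<le> 0"
proof (induction n)
  case 0
  then show ?case by (simp add: sqrt_coeff_Suc)
next
  case (Suc n)
  have "of_nat (Suc n) - 1/2 \<ge> (0::real)" by simp
  with Suc.IH show ?case
    unfolding sqrt_coeff_Suc[of "Suc n"]
    by (simp add: divide_nonpos_pos mult_nonpos_nonneg del: of_nat_Suc)
qed

lemma sum_sqrt_coeff: "(\<Sum>k\<le>n. sqrt_coeff k) = (1 - 2 * of_nat n) * sqrt_coeff n"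
proof (induction n)
  case 0
  then show ?case by simp
next
  case (Suc n)
  then have "(\<Sum>k\<le>Suc n. sqrt_coeff k) = (1 - 2 * of_nat n) * sqrt_coeff n + sqrt_coeff (Suc n)"
    by simp
  also have "\<dots> = (1 - 2 * of_nat (Suc n)) * sqrt_coeff (Suc n)"
    unfolding sqrt_coeff_Suc by (simp add: field_simps del: of_nat_Suc)
  finally show ?case .
qed

lemma sum_sqrt_coeff_nonneg: "(\<Sum>k\<le>n. sqrt_coeff k) \<ge> 0"
proof (cases n)
  case (Suc m)
  then have "sqrt_coeff n \<le> 0" and "1 - 2 * real n \<le> 0"
    using sqrt_coeff_Suc_nonpos by simp_all
  then show ?thesis
    unfolding sum_sqrt_coeff by (simp add: mult_nonpos_nonpos)
qed simp

lemma sum_abs_sqrt_coeff_Suc_le_1: "(\<Sum>k\<le>n. \<bar>sqrt_coeff (Suc k)\<bar>) \<le> 1"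
proof -
  have "(\<Sum>k\<le>n. \<bar>sqrt_coeff (Suc k)\<bar>) = - (\<Sum>k\<le>n. sqrt_coeff (Suc k))"
    using sqrt_coeff_Suc_nonpos by (simp add: sum_negf[symmetric] abs_of_nonpos)
  also have "(\<Sum>k\<le>n. sqrt_coeff (Suc k)) = (\<Sum>k\<le>Suc n. sqrt_coeff k) - 1"
    by (simp add: sum.atMost_Suc_shift del: sum.atMost_Suc)
  finally show ?thesis
    using sum_sqrt_coeff_nonneg[of "Suc n"] by simp
qed

lemma summable_abs_sqrt_coeff_Suc: "summable (\<lambda>k. \<bar>sqrt_coeff (Suc k)\<bar>)"
  by (rule bounded_imp_summable[where B=1]) (auto intro: sum_abs_sqrt_coeff_Suc_le_1)

lemma summable_abs_sqrt_coeff: "summable (\<lambda>k. \<bar>sqrt_coeff k\<bar>)"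
  using summable_abs_sqrt_coeff_Suc summable_Suc_iff[of "\<lambda>k. \<bar>sqrt_coeff k\<bar>"] by simp

lemma suminf_abs_sqrt_coeff_Suc_le_1: "(\<Sum>k. \<bar>sqrt_coeff (Suc k)\<bar>) \<le> 1"
proof (rule suminf_le_const[OF summable_abs_sqrt_coeff_Suc])
  fix n
  show "(\<Sum>k<n. \<bar>sqrt_coeff (Suc k)\<bar>) \<le> 1"
  proof (cases n)
    case (Suc m)
    then have "{..<n} = {..m}" by auto
    then show ?thesis using sum_abs_sqrt_coeff_Suc_le_1 by simp
  qed simp
qed

text \<open>The Cauchy square of the series is \<open>1 - x\<close> (Vandermonde's identity).\<close>

lemma sqrt_coeff_convolution:
  "(\<Sum>i\<le>n. sqrt_coeff i * sqrt_coeff (n - i)) = (if n = 0 then 1 else if n = 1 then -1 else 0)"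
proof -
  have "(\<Sum>i\<le>n. sqrt_coeff i * sqrt_coeff (n - i))
      = (\<Sum>i\<in>{0..n}. (-1) ^ n * (((1/2::real) gchoose i) * ((1/2) gchoose (n - i))))"
    by (rule sum.cong) (auto simp: sqrt_coeff_def power_add[symmetric] atLeast0AtMost)
  also have "\<dots> = (-1) ^ n * ((1/2 + 1/2::real) gchoose n)"
    by (simp add: sum_distrib_left[symmetric] gbinomial_Vandermonde)
  also have "(1/2 + 1/2::real) gchoose n = of_nat (1 choose n)"
    using binomial_gbinomial[of 1 n, where 'a=real] by simp
  finally show ?thesis
    by (cases n; cases "n = 1") (auto simp: binomial_eq_0)
qed

lemma scaleC_zero_right [simp]: "scaleC c (0::'a::cstar_algebra) = 0"
proof -
  have "scaleC c (0::'a) = scaleC c 0 + scaleC c 0" by (metis add_0 scaleC_add_right)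
  then show ?thesis by simp
qed

lemma scaleC_zero_left [simp]: "scaleC 0 (x::'a::cstar_algebra) = 0"
  using scaleR_scaleC[of 0 x] by simp

lemma scaleC_minus_right: "scaleC c (- (x::'a::cstar_algebra)) = - scaleC c x"
  by (metis add.right_inverse add_eq_0_iff scaleC_add_right scaleC_zero_right)

lemma scaleC_diff_right: "scaleC c ((x::'a::cstar_algebra) - y) = scaleC c x - scaleC c y"
  by (metis diff_conv_add_uminus scaleC_add_right scaleC_minus_right)

lemma scaleC_minus_left: "scaleC (- c) (x::'a::cstar_algebra) = - scaleC c x"
  by (metis add.right_inverse add_eq_0_iff scaleC_add_left scaleC_zero_left)

lemma scaleC_ii_ii: "scaleC \<i> (scaleC \<i> (x::'a::cstar_algebra)) = - x"
  by (simp add: scaleC_scaleC scaleC_minus_left scaleC_one)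

lemma adj_zero [simp]: "adj (0::'a::cstar_algebra) = 0"
proof -
  have "adj (0::'a) = adj 0 + adj 0" by (metis add_0 adj_add)
  then show ?thesis by simp
qed

lemma adj_minus: "adj (- (x::'a::cstar_algebra)) = - adj x"
  by (metis add.right_inverse add_eq_0_iff adj_add adj_zero)

lemma adj_diff: "adj ((x::'a::cstar_algebra) - y) = adj x - adj y"
  by (metis adj_add adj_minus diff_conv_add_uminus)

lemma adj_one [simp]: "adj (1::'a::cstar_algebra) = 1"
  by (metis adj_adj adj_mult mult_1_right)

lemma adj_scaleR: "adj (r *\<^sub>R (x::'a::cstar_algebra)) = r *\<^sub>R adj x"
  by (simp add: scaleR_scaleC adj_scaleC)

lemma adj_of_real [simp]: "adj (of_real r :: 'a::cstar_algebra) = of_real r"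
  by (simp add: of_real_def adj_scaleR)

lemma adj_power: "adj ((x::'a::cstar_algebra) ^ n) = adj x ^ n"
  by (induction n) (simp_all add: adj_mult power_commutes)

lemma of_real_mult_commute: "of_real r * x = x * (of_real r :: 'a::real_algebra_1)"
  by (simp add: of_real_def)

lemma norm_adj [simp]: "norm (adj (x::'a::cstar_algebra)) = norm x"
proof -
  have le: "norm (adj y) \<le> norm y" for y :: 'a
  proof (cases "adj y = 0")
    case False
    have "norm (adj y) * norm (adj y) = norm (y * adj y)"
      using cstar_identity[of "adj y"] by (simp add: adj_adj power2_eq_square)
    also have "\<dots> \<le> norm y * norm (adj y)" by (rule norm_mult_ineq)
    finally show ?thesis using False by simp
  qed simp
  show ?thesis using le[of x] le[of "adj x"] by (simp add: adj_adj)
qed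

lemma bounded_linear_adj: "bounded_linear (adj :: 'a::cstar_algebra \<Rightarrow> 'a)"
  by (rule bounded_linear_intro[where K=1]) (simp_all add: adj_add adj_scaleR)

lemma norm_mult_adj: "norm (x * adj x) = (norm (x::'a::cstar_algebra))\<^sup>2"
  by (metis adj_adj cstar_identity norm_adj)

lemma adj_mult_self_eq_0_iff: "adj x * x = 0 \<longleftrightarrow> (x::'a::cstar_algebra) = 0"
  by (metis cstar_identity norm_eq_zero zero_eq_power2 mult_zero_right)

lemma selfadjoint_square_eq_0: "adj x = x \<Longrightarrow> x * x = 0 \<Longrightarrow> (x::'a::cstar_algebra) = 0"
  by (metis adj_mult_self_eq_0_iff)

text \<open>Elements \<open>x + \<i> y\<close> with commuting self-adjoint \<open>x\<close>, \<open>y\<close> play the role of complex numbers.\<close>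

lemma adj_cartesian:
  "adj x = x \<Longrightarrow> adj y = y \<Longrightarrow> adj (x + scaleC \<i> y) = x - scaleC \<i> (y::'a::cstar_algebra)"
  by (simp add: adj_add adj_scaleC scaleC_minus_left)

lemma adj_mult_cartesian:
  fixes x y :: "'a::cstar_algebra"
  assumes "adj x = x" "adj y = y" "x * y = y * x"
  shows "adj (x + scaleC \<i> y) * (x + scaleC \<i> y) = x * x + y * y"
  using assms
  by (simp add: adj_cartesian algebra_simps scaleC_mult_left scaleC_mult_right scaleC_ii_ii
      scaleC_add_right scaleC_diff_right)

lemma mult_adj_add_adj_mult_cartesian:
  fixes x y :: "'a::cstar_algebra"
  assumes "adj x = x" "adj y = y"
  shows "(x + scaleC \<i> y) * adj (x + scaleC \<i> y) + adj (x + scaleC \<i> y) * (x + scaleC \<i> y)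
       = 2 *\<^sub>R (x * x) + 2 *\<^sub>R (y * y)"
  using assms
  by (simp add: adj_cartesian algebra_simps scaleC_mult_left scaleC_mult_right scaleC_ii_ii scaleR_2
      scaleC_add_right scaleC_diff_right)

lemma norm_re_le:
  fixes x y :: "'a::cstar_algebra"
  assumes "adj x = x" "adj y = y"
  shows "norm x \<le> norm (x + scaleC \<i> y)"
proof -
  let ?z = "x + scaleC \<i> y"
  have "?z + adj ?z = 2 *\<^sub>R x" using assms by (simp add: adj_cartesian scaleR_2)
  then have "norm (2 *\<^sub>R x) \<le> norm ?z + norm (adj ?z)" by (metis norm_triangle_ineq)
  then show ?thesis by simp
qed

lemma norm_im_le:
  fixes x y :: "'a::cstar_algebra"
  assumes "adj x = x" "adj y = y"
  shows "norm y \<le> norm (x + scaleC \<i> y)"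
proof -
  have "scaleC (-\<i>) (x + scaleC \<i> y) = y + scaleC \<i> (- x)"
    by (simp add: scaleC_add_right scaleC_scaleC scaleC_minus_right scaleC_minus_left scaleC_one)
  then have "norm (x + scaleC \<i> y) = norm (y + scaleC \<i> (- x))"
    by (metis norm_scaleC norm_minus_cancel norm_ii mult_1)
  moreover have "norm y \<le> norm (y + scaleC \<i> (- x))"
    using assms by (intro norm_re_le) (simp_all add: adj_minus)
  ultimately show ?thesis by simp
qed

lemma norm_diff_squares_le_norm_sum_squares:
  fixes m k :: "'a::cstar_algebra"
  assumes "adj m = m" "adj k = k" "m * k = k * m"
  shows "norm (m * m - k * k) \<le> norm (m * m + k * k)"
proof -
  let ?z = "m + scaleC \<i> k"
  have "?z * ?z + adj ?z * adj ?z = 2 *\<^sub>R (m * m - k * k)"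
    using assms by (simp add: adj_cartesian algebra_simps scaleC_mult_left scaleC_mult_right
        scaleC_ii_ii scaleR_2 scaleC_add_right scaleC_diff_right)
  then have "norm (2 *\<^sub>R (m * m - k * k)) \<le> norm ?z * norm ?z + norm (adj ?z) * norm (adj ?z)"
    by (metis norm_triangle_le add_mono norm_mult_ineq)
  also have "\<dots> = 2 * norm (m * m + k * k)"
    using assms by (simp add: power2_eq_square[symmetric] cstar_identity[symmetric] adj_mult_cartesian)
  finally show ?thesis by simp
qed

lemma cartesian_decomposition:
  fixes y :: "'a::cstar_algebra"
  obtains h k where "adj h = h" "adj k = k" "y = h + scaleC \<i> k"
proof
  let ?h = "(1/2::real) *\<^sub>R (y + adj y)"
  let ?k = "scaleC (- \<i> / 2) (y - adj y)"
  show "adj ?h = ?h" by (simp add: adj_scaleR adj_add adj_adj add.commute)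
  have "adj ?k = scaleC (\<i> / 2) (adj y - y)" by (simp add: adj_scaleC adj_diff adj_adj)
  then show "adj ?k = ?k"
    by (metis minus_diff_eq scaleC_minus_right scaleC_minus_left minus_divide_left)
  have "scaleC \<i> ?k = (1/2::real) *\<^sub>R (y - adj y)"
    by (simp add: scaleC_scaleC scaleR_scaleC)
  then show "y = ?h + scaleC \<i> ?k"
    by (simp add: scaleR_add_right scaleR_diff_right scaleR_add_left[symmetric])
qed

definition invertible :: "'a::cstar_algebra \<Rightarrow> bool" where
  "invertible x \<longleftrightarrow> (\<exists>g. x * g = 1 \<and> g * x = 1)"

lemma invertible_one_minus:
  fixes x :: "'a::cstar_algebra"
  assumes "norm x < 1"
  shows "invertible (1 - x)"
proof -
  have "summable (\<lambda>n. norm (x ^ n))"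
    by (rule summable_comparison_test[where g="\<lambda>n. norm x ^ n"])
       (auto intro: norm_power_ineq summable_geometric simp: assms)
  then have s: "summable (\<lambda>n. x ^ n)" by (rule summable_norm_cancel)
  have "(\<lambda>n. - (x ^ Suc n - x ^ n)) sums (- (0 - x ^ 0))"
    using assms by (intro sums_minus telescope_sums LIMSEQ_power_zero)
  then have "(\<lambda>n. (1 - x) * x ^ n) sums 1" and "(\<lambda>n. x ^ n * (1 - x)) sums 1"
    by (simp_all add: algebra_simps power_commutes)
  then have "(1 - x) * suminf (\<lambda>n. x ^ n) = 1" and "suminf (\<lambda>n. x ^ n) * (1 - x) = 1"
    using suminf_mult[OF s, of "1 - x"] suminf_mult2[OF s, of "1 - x"] by (simp_all add: sums_iff)
  then show ?thesis unfolding invertible_def by blast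
qed

lemma inverse_commute:
  fixes z w g :: "'a::cstar_algebra"
  assumes "w * g = 1" "g * w = 1" "z * w = w * z"
  shows "z * g = g * z"
proof -
  have "g * z = g * (z * w) * g" using assms(1) by (simp add: mult.assoc)
  also have "\<dots> = (g * w) * z * g" using assms(3) by (simp add: mult.assoc)
  finally show ?thesis using assms(2) by simp
qed

lemma inverse_selfadjoint:
  fixes w g :: "'a::cstar_algebra"
  assumes "w * g = 1" "g * w = 1" "adj w = w"
  shows "adj g = g"
proof -
  have "adj g * w = 1" using assms(1,3) by (metis adj_mult adj_one)
  then have "adj g * w * g = g" by simp
  then show ?thesis using assms(1) by (simp add: mult.assoc)
qed

lemma invertible_one_minus_commute:
  fixes a b :: "'a::cstar_algebra"
  assumes "invertible (1 - a * b)"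
  shows "invertible (1 - b * a)"
proof -
  obtain g where g: "(1 - a * b) * g = 1" "g * (1 - a * b) = 1"
    using assms invertible_def by blast
  have g1: "a * b * g = g - 1" and g2: "g * a * b = g - 1"
    using g by (simp_all add: algebra_simps mult.assoc)
  have "(1 - b * a) * (1 + b * g * a) = 1 + b * g * a - b * a - b * (a * b * g) * a"
    by (simp add: algebra_simps mult.assoc)
  also have "\<dots> = 1"
    by (simp only: g1) (simp add: algebra_simps)
  finally have "(1 - b * a) * (1 + b * g * a) = 1" .
  moreover have "(1 + b * g * a) * (1 - b * a) = 1 + b * g * a - b * a - b * (g * a * b) * a"
    by (simp add: algebra_simps mult.assoc)
  moreover have "\<dots> = 1"
    by (simp only: g2) (simp add: algebra_simps)
  ultimately show ?thesis unfolding invertible_def by auto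
qed

definition sqrt_series :: "'a::{real_normed_algebra_1,banach} \<Rightarrow> 'a" where
  "sqrt_series y = (\<Sum>n. sqrt_coeff n *\<^sub>R y ^ n)"

lemma norm_sqrt_series_term_le:
  fixes y :: "'a::{real_normed_algebra_1,banach}"
  assumes "norm y \<le> 1"
  shows "norm (sqrt_coeff n *\<^sub>R y ^ n) \<le> \<bar>sqrt_coeff n\<bar>"
proof -
  have "norm (y ^ n) \<le> 1"
    using order_trans[OF norm_power_ineq power_le_one[OF norm_ge_zero assms]] .
  then show ?thesis by (simp add: mult_left_le)
qed

lemma summable_norm_sqrt_series:
  fixes y :: "'a::{real_normed_algebra_1,banach}"
  assumes "norm y \<le> 1"
  shows "summable (\<lambda>n. norm (sqrt_coeff n *\<^sub>R y ^ n))"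
  by (rule summable_comparison_test[OF _ summable_abs_sqrt_coeff])
     (use norm_sqrt_series_term_le[OF assms] in auto)

lemma sqrt_series_mult_self:
  fixes y :: "'a::{real_normed_algebra_1,banach}"
  assumes "norm y \<le> 1"
  shows "sqrt_series y * sqrt_series y = 1 - y"
proof -
  let ?f = "\<lambda>n. sqrt_coeff n *\<^sub>R y ^ n"
  have conv: "(\<Sum>i\<le>n. ?f i * ?f (n - i)) = (\<Sum>i\<le>n. sqrt_coeff i * sqrt_coeff (n - i)) *\<^sub>R y ^ n"
    for n unfolding scaleR_sum_left by (rule sum.cong) (auto simp: power_add[symmetric])
  have "sqrt_series y * sqrt_series y = (\<Sum>n. \<Sum>i\<le>n. ?f i * ?f (n - i))"
    unfolding sqrt_series_def
    by (rule Cauchy_product[OF summable_norm_sqrt_series[OF assms] summable_norm_sqrt_series[OF assms]])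
  also have "\<dots> = (\<Sum>n. (if n = 0 then 1 else if n = 1 then -1 else 0) *\<^sub>R y ^ n)"
    by (simp only: conv sqrt_coeff_convolution)
  also have "\<dots> = (\<Sum>n\<in>{0,1}. (if n = 0 then 1 else if n = 1 then -1 else 0) *\<^sub>R y ^ n)"
    by (rule suminf_finite) auto
  also have "\<dots> = 1 - y" by simp
  finally show ?thesis .
qed

lemma norm_one_minus_sqrt_series_le:
  fixes y :: "'a::{real_normed_algebra_1,banach}"
  assumes "norm y \<le> 1"
  shows "norm (1 - sqrt_series y) \<le> 1"
proof -
  let ?f = "\<lambda>n. sqrt_coeff n *\<^sub>R y ^ n"
  have sn: "summable (\<lambda>n. norm (?f (Suc n)))"
    using summable_norm_sqrt_series[OF assms] summable_Suc_iff[of "\<lambda>n. norm (?f n)"] by blast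
  have "(\<Sum>n. ?f (Suc n)) = sqrt_series y - 1"
    unfolding sqrt_series_def
    using suminf_split_head[OF summable_norm_cancel[OF summable_norm_sqrt_series[OF assms]]] by simp
  then have "norm (1 - sqrt_series y) = norm (\<Sum>n. ?f (Suc n))"
    by (simp add: norm_minus_commute)
  also have "\<dots> \<le> (\<Sum>n. norm (?f (Suc n)))" by (rule summable_norm[OF sn])
  also have "\<dots> \<le> (\<Sum>n. \<bar>sqrt_coeff (Suc n)\<bar>)"
    by (rule suminf_le[OF _ sn summable_abs_sqrt_coeff_Suc])
       (use norm_sqrt_series_term_le[OF assms] in blast)
  also have "\<dots> \<le> 1" by (rule suminf_abs_sqrt_coeff_Suc_le_1)
  finally show ?thesis .
qed

lemma sqrt_series_commute:
  fixes y z :: "'a::{real_normed_algebra_1,banach}"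
  assumes "norm y \<le> 1" "z * y = y * z"
  shows "z * sqrt_series y = sqrt_series y * z"
proof -
  have s: "summable (\<lambda>n. sqrt_coeff n *\<^sub>R y ^ n)"
    by (rule summable_norm_cancel[OF summable_norm_sqrt_series[OF assms(1)]])
  have "y ^ n * z = z * y ^ n" for n
    using power_commuting_commutes[OF assms(2)[symmetric]] .
  then show ?thesis
    unfolding sqrt_series_def using suminf_mult[OF s, of z] suminf_mult2[OF s, of z] by simp
qed

lemma adj_sqrt_series:
  fixes y :: "'a::cstar_algebra"
  assumes "norm y \<le> 1" "adj y = y"
  shows "adj (sqrt_series y) = sqrt_series y"
proof -
  have "adj (sqrt_series y) = (\<Sum>n. adj (sqrt_coeff n *\<^sub>R y ^ n))"
    unfolding sqrt_series_def
    by (rule bounded_linear.suminf[OF bounded_linear_adj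
          summable_norm_cancel[OF summable_norm_sqrt_series[OF assms(1)]]])
  then show ?thesis
    using assms(2) by (simp add: adj_scaleR adj_power sqrt_series_def)
qed

section \<open>Positive elements\<close>

text \<open>\<open>pos_spectrum a\<close> says that \<open>a\<close> is self-adjoint with spectrum in \<open>[0, \<infinity>)\<close>; without spectral
  theory this is expressed by the equivalent condition \<open>\<parallel>t - a\<parallel> \<le> t\<close> for some \<open>t > 0\<close>.\<close>

definition pos_spectrum :: "'a::cstar_algebra \<Rightarrow> bool" where
  "pos_spectrum a \<longleftrightarrow> adj a = a \<and> (\<exists>t>0. norm (of_real t - a) \<le> t)"

lemma pos_spectrum_selfadjoint: "pos_spectrum a \<Longrightarrow> adj a = a"
  by (simp add: pos_spectrum_def)

lemma pos_spectrum_0 [simp]: "pos_spectrum (0::'a::cstar_algebra)"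
  unfolding pos_spectrum_def by (auto intro!: exI[where x=1])

lemma pos_spectrum_add:
  assumes "pos_spectrum a" "pos_spectrum (b::'a::cstar_algebra)"
  shows "pos_spectrum (a + b)"
proof -
  obtain s where s: "s > 0" "norm (of_real s - a) \<le> s" using assms(1) pos_spectrum_def by blast
  obtain t where t: "t > 0" "norm (of_real t - b) \<le> t" using assms(2) pos_spectrum_def by blast
  have "norm (of_real (s + t) - (a + b)) = norm ((of_real s - a) + (of_real t - b))"
    by (simp add: algebra_simps)
  also have "\<dots> \<le> s + t" using s t by (meson add_mono norm_triangle_le)
  finally show ?thesis
    using assms s t unfolding pos_spectrum_def by (auto simp: adj_add intro!: exI[where x="s+t"])
qed

lemma pos_spectrum_scaleR:
  assumes "pos_spectrum a" "r \<ge> 0"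
  shows "pos_spectrum (r *\<^sub>R (a::'a::cstar_algebra))"
proof (cases "r = 0")
  case False
  then have r: "r > 0" using assms by simp
  obtain s where s: "s > 0" "norm (of_real s - a) \<le> s" using assms(1) pos_spectrum_def by blast
  have "of_real (r * s) - r *\<^sub>R a = r *\<^sub>R (of_real s - a)"
    by (simp add: of_real_def scaleR_diff_right)
  then have "norm (of_real (r * s) - r *\<^sub>R a) \<le> r * s"
    using r s by simp
  then show ?thesis
    using assms r s unfolding pos_spectrum_def by (auto simp: adj_scaleR intro!: exI[where x="r*s"])
qed simp

lemma pos_spectrum_of_real:
  assumes "r \<ge> 0"
  shows "pos_spectrum (of_real r :: 'a::cstar_algebra)"
  unfolding pos_spectrum_def using assms
  by (auto intro!: exI[where x="r+1"] simp: of_real_def adj_scaleR scaleR_diff_left[symmetric])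

lemma pos_spectrum_norm_minus:
  assumes "adj x = (x::'a::cstar_algebra)"
  shows "pos_spectrum (of_real (norm x) - x)"
proof -
  have "norm (of_real (norm x + 1) - (of_real (norm x) - x)) = norm (1 + x)"
    by (simp add: algebra_simps)
  also have "\<dots> \<le> norm x + 1" by (metis norm_one norm_triangle_ineq add.commute)
  finally show ?thesis
    unfolding pos_spectrum_def using assms
    by (auto simp: adj_diff intro!: exI[where x="norm x + 1"] add_nonneg_pos)
qed

lemma invertible_one_plus_pos_spectrum:
  assumes "pos_spectrum (c::'a::cstar_algebra)"
  shows "invertible (1 + c)"
proof -
  obtain t where t: "t > 0" "norm (of_real t - c) \<le> t" using assms pos_spectrum_def by blast
  define x where "x = (1 / (1 + t)) *\<^sub>R (of_real t - c)"
  have "norm x = norm (of_real t - c) / (1 + t)" using t by (simp add: x_def)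
  also have "\<dots> \<le> t / (1 + t)" using t by (simp add: divide_right_mono)
  also have "\<dots> < 1" using t by simp
  finally obtain g where g: "(1 - x) * g = 1" "g * (1 - x) = 1"
    using invertible_one_minus invertible_def by blast
  have "(t + t * t) / (1 + t) = t" using t by (simp add: field_simps)
  then have e: "1 + c = (1 + t) *\<^sub>R (1 - x)"
    using t by (simp add: x_def scaleR_diff_right of_real_def algebra_simps)
  show ?thesis
    unfolding invertible_def by (rule exI[where x="(1 / (1 + t)) *\<^sub>R g"]) (use g t in \<open>simp add: e\<close>)
qed

lemma pos_spectrum_sqrt:
  fixes a :: "'a::cstar_algebra"
  assumes "pos_spectrum a"
  obtains k where "pos_spectrum k" "k * k = a" "\<And>z. z * a = a * z \<Longrightarrow> z * k = k * z"
proof -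
  obtain t where t: "t > 0" "norm (of_real t - a) \<le> t" using assms pos_spectrum_def by blast
  define y where "y = (1 / t) *\<^sub>R (of_real t - a)"
  have ny: "norm y \<le> 1" using t by (simp add: y_def divide_le_eq_1)
  have ay: "adj y = y" using pos_spectrum_selfadjoint[OF assms] by (simp add: y_def adj_scaleR adj_diff)
  define k where "k = sqrt t *\<^sub>R sqrt_series y"
  have "k * k = t *\<^sub>R (1 - y)"
    using t by (simp add: k_def sqrt_series_mult_self[OF ny] real_sqrt_mult[symmetric])
  also have "\<dots> = a" using t by (simp add: y_def scaleR_diff_right of_real_def)
  finally have kk: "k * k = a" .
  have "of_real (sqrt t) - k = sqrt t *\<^sub>R (1 - sqrt_series y)"
    by (simp add: k_def of_real_def scaleR_diff_right)
  then have "norm (of_real (sqrt t) - k) \<le> sqrt t"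
    using norm_one_minus_sqrt_series_le[OF ny] t by (simp add: mult_left_le)
  moreover have "adj k = k" using adj_sqrt_series[OF ny ay] by (simp add: k_def adj_scaleR)
  ultimately have "pos_spectrum k"
    unfolding pos_spectrum_def using t by (auto intro!: exI[where x="sqrt t"])
  moreover have "z * k = k * z" if "z * a = a * z" for z
  proof -
    have "z * y = y * z" using that by (simp add: y_def algebra_simps of_real_def)
    then show ?thesis using sqrt_series_commute[OF ny] by (simp add: k_def)
  qed
  ultimately show ?thesis using that kk by blast
qed

lemma pos_spectrum_square:
  fixes h :: "'a::cstar_algebra"
  assumes ah: "adj h = h"
  shows "pos_spectrum (h * h)"
proof (cases "h = 0")
  case False
  define h' where "h' = (1 / norm h) *\<^sub>R h"
  have nh': "norm h' = 1" using False by (simp add: h'_def)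
  have ah': "adj h' = h'" using ah by (simp add: h'_def adj_scaleR)
  have "norm (of_real 1 - (1 - h' * h')) \<le> 1"
    using norm_mult_ineq[of h' h'] nh' by simp
  then have "pos_spectrum (1 - h' * h')"
    unfolding pos_spectrum_def using ah' by (auto simp: adj_diff adj_mult intro!: exI[where x=1])
  then obtain w where w: "pos_spectrum w" "w * w = 1 - h' * h'"
    and w_comm: "\<And>z. z * (1 - h' * h') = (1 - h' * h') * z \<Longrightarrow> z * w = w * z"
    using pos_spectrum_sqrt by blast
  have hw: "h' * w = w * h'" by (rule w_comm) (simp add: algebra_simps mult.assoc)
  have aw: "adj w = w" using w(1) pos_spectrum_selfadjoint by blast
  text \<open>\<open>h' + \<i> w\<close> is unitary, so \<open>\<parallel>w\<parallel> \<le> 1\<close> and hence \<open>\<parallel>1 - h'\<^sup>2\<parallel> = \<parallel>w\<^sup>2\<parallel> \<le> 1\<close>.\<close>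
  have "adj (h' + scaleC \<i> w) * (h' + scaleC \<i> w) = 1"
    using adj_mult_cartesian[OF ah' aw hw] w(2) by simp
  then have "norm (h' + scaleC \<i> w) = 1"
    using cstar_identity[of "h' + scaleC \<i> w"] norm_ge_zero[of "h' + scaleC \<i> w"]
    by (auto simp: power2_eq_1_iff)
  then have nw: "norm w \<le> 1" using norm_im_le[OF ah' aw] by simp
  have "norm (of_real 1 - h' * h') = norm (w * w)" using w(2) by simp
  also have "\<dots> \<le> 1" using norm_mult_ineq[of w w] nw mult_le_one[OF nw norm_ge_zero nw] by linarith
  finally have "pos_spectrum (h' * h')"
    unfolding pos_spectrum_def using ah' by (auto simp: adj_mult intro!: exI[where x=1])
  moreover have "h * h = (norm h * norm h) *\<^sub>R (h' * h')" using False by (simp add: h'_def)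
  ultimately show ?thesis using pos_spectrum_scaleR[of "h' * h'" "norm h * norm h"] by simp
qed simp

lemma pos_spectrum_mult_commute:
  fixes a b :: "'a::cstar_algebra"
  assumes "pos_spectrum a" "pos_spectrum b" "a * b = b * a"
  shows "pos_spectrum (a * b)"
proof -
  obtain r where r: "pos_spectrum r" "r * r = a" "\<And>z. z * a = a * z \<Longrightarrow> z * r = r * z"
    using pos_spectrum_sqrt[OF assms(1)] by blast
  obtain s where s: "pos_spectrum s" "s * s = b" "\<And>z. z * b = b * z \<Longrightarrow> z * s = s * z"
    using pos_spectrum_sqrt[OF assms(2)] by blast
  have "b * r = r * b" using r(3) assms(3) by simp
  then have rs: "r * s = s * r" using s(3) by simp
  have "adj (r * s) = r * s"
    using rs pos_spectrum_selfadjoint[OF r(1)] pos_spectrum_selfadjoint[OF s(1)] by (simp add: adj_mult)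
  moreover have "(r * s) * (r * s) = a * b"
    using rs r(2) s(2) by (metis mult.assoc)
  ultimately show ?thesis using pos_spectrum_square by metis
qed

lemma norm_le_if_pos_spectrum_bounds:
  fixes x :: "'a::cstar_algebra"
  assumes "M \<ge> 0" "adj x = x" "pos_spectrum (of_real M - x)" "pos_spectrum (of_real M + x)"
  shows "norm x \<le> M"
proof -
  obtain k where k: "pos_spectrum k" "k * k = of_real M - x"
    and k_comm: "\<And>z. z * (of_real M - x) = (of_real M - x) * z \<Longrightarrow> z * k = k * z"
    using pos_spectrum_sqrt[OF assms(3)] by blast
  obtain m where m: "pos_spectrum m" "m * m = of_real M + x"
    using pos_spectrum_sqrt[OF assms(4)] by blast
  have "m * (of_real M + x) = (of_real M + x) * m"
    using m(2) by (metis mult.assoc)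
  then have "m * (of_real M - x) = (of_real M - x) * m"
    by (simp add: algebra_simps of_real_mult_commute)
  then have "m * k = k * m" by (rule k_comm)
  then have "norm (m * m - k * k) \<le> norm (m * m + k * k)"
    using pos_spectrum_selfadjoint[OF m(1)] pos_spectrum_selfadjoint[OF k(1)]
    by (intro norm_diff_squares_le_norm_sum_squares)
  moreover have "m * m - k * k = 2 *\<^sub>R x" using k(2) m(2) by (simp add: scaleR_2)
  moreover have "m * m + k * k = of_real (2 * M)"
    using k(2) m(2) by (simp add: of_real_add[symmetric] del: of_real_add)
  ultimately have "norm (2 *\<^sub>R x) \<le> norm (of_real (2 * M) :: 'a)" by (simp only:)
  then have "\<bar>2\<bar> * norm x \<le> \<bar>2 * M\<bar>" by (simp only: norm_scaleR norm_of_real)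
  then show ?thesis using assms(1) by simp
qed

lemma norm_less_one_if_invertible_one_minus:
  fixes p :: "'a::cstar_algebra"
  assumes pp: "pos_spectrum p" and np: "norm p \<le> 1" and ip: "invertible (1 - p)"
  shows "norm p < 1"
proof -
  define c where "c = 1 - p"
  have ap: "adj p = p" using pp pos_spectrum_selfadjoint by blast
  have ac: "adj c = c" using ap by (simp add: c_def adj_diff)
  have pc: "pos_spectrum c"
    unfolding pos_spectrum_def using ac np by (auto simp: c_def intro!: exI[where x=1])
  have "norm c \<le> 1"
  proof (rule norm_le_if_pos_spectrum_bounds[OF _ ac])
    show "pos_spectrum (of_real 1 - c)" using pp by (simp add: c_def)
    show "pos_spectrum (of_real 1 + c)" using pos_spectrum_add[OF pos_spectrum_of_real[of 1] pc] by simp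
  qed simp
  obtain g where g: "c * g = 1" "g * c = 1" using ip invertible_def c_def by blast
  have ag: "adj g = g" by (rule inverse_selfadjoint[OF g ac])
  define M where "M = norm g"
  have M1: "M \<ge> 1"
  proof -
    have "1 \<le> norm c * norm g" using norm_mult_ineq[of c g] g by simp
    also have "\<dots> \<le> norm g" using \<open>norm c \<le> 1\<close> by (simp add: mult_left_le_one_le)
    finally show ?thesis by (simp add: M_def)
  qed
  text \<open>\<open>c\<^sup>-\<^sup>1 \<le> M\<close> gives \<open>c (M - c\<^sup>-\<^sup>1) = M c - 1 \<ge> 0\<close>, i.e. \<open>p \<le> 1 - 1/M\<close>.\<close>
  have cM: "c * (of_real M - g) = M *\<^sub>R c - 1"
    using g by (simp add: algebra_simps of_real_mult_commute of_real_def)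
  have "c * (of_real M - g) = (of_real M - g) * c" using g by (simp add: algebra_simps of_real_mult_commute)
  then have "pos_spectrum (c * (of_real M - g))"
    using pos_spectrum_mult_commute[OF pc pos_spectrum_norm_minus[OF ag]] by (simp add: M_def)
  then have "pos_spectrum ((1 / M) *\<^sub>R (c * (of_real M - g)))"
    using M1 by (simp add: pos_spectrum_scaleR)
  moreover have "(1 / M) *\<^sub>R (c * (of_real M - g)) = of_real (1 - 1 / M) - p"
    unfolding cM using M1 by (simp add: scaleR_diff_right c_def of_real_def algebra_simps)
  ultimately have "norm p \<le> 1 - 1 / M"
    using M1 ap pp by (intro norm_le_if_pos_spectrum_bounds pos_spectrum_add pos_spectrum_of_real) simp_all
  also have "\<dots> < 1" using M1 by simp
  finally show ?thesis .
qed

lemma eq_0_if_pos_spectrum_neg_adj_mult: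
  fixes y :: "'a::cstar_algebra"
  assumes neg: "pos_spectrum (- (adj y * y))"
  shows "y = 0"
proof (rule ccontr)
  assume "y \<noteq> 0"
  have pos: "pos_spectrum (y * adj y)"
  proof -
    obtain h k where hk: "adj h = h" "adj k = k" "y = h + scaleC \<i> k"
      by (rule cartesian_decomposition)
    have "y * adj y = 2 *\<^sub>R (h * h) + 2 *\<^sub>R (k * k) + (- (adj y * y))"
      using mult_adj_add_adj_mult_cartesian[OF hk(1,2)] hk(3) by (simp add: algebra_simps)
    then show ?thesis
      by (simp only:) (intro pos_spectrum_add pos_spectrum_scaleR neg pos_spectrum_square hk(1,2); simp)
  qed
  text \<open>Normalise \<open>y\<close>; then \<open>y y\<^sup>*\<close> has norm \<open>1\<close> while \<open>1 - y y\<^sup>*\<close> is invertible by Jacobson's lemma.\<close>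
  define y' where "y' = (1 / norm y) *\<^sub>R y"
  have c: "1 / (norm y * norm y) \<ge> 0" by simp
  have "y' * adj y' = (1 / (norm y * norm y)) *\<^sub>R (y * adj y)"
    and "- (adj y' * y') = (1 / (norm y * norm y)) *\<^sub>R (- (adj y * y))"
    by (simp_all add: y'_def adj_scaleR)
  then have pos': "pos_spectrum (y' * adj y')" and neg': "pos_spectrum (- (adj y' * y'))"
    using pos_spectrum_scaleR[OF pos c] pos_spectrum_scaleR[OF neg c] by simp_all
  have n1: "norm (y' * adj y') = 1"
    using \<open>y \<noteq> 0\<close> norm_mult_adj[of y'] by (simp add: y'_def)
  have "invertible (1 - adj y' * y')"
    using invertible_one_plus_pos_spectrum[OF neg'] by simp
  then have "invertible (1 - y' * adj y')" by (rule invertible_one_minus_commute)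
  then have "norm (y' * adj y') < 1"
    using norm_less_one_if_invertible_one_minus[OF pos'] n1 by simp
  then show False using n1 by simp
qed

text \<open>With \<open>a = b\<^sup>* b\<close> and \<open>r = \<surd>(a\<^sup>2)\<close>, the element \<open>u = r - a\<close>
  (twice the negative part of \<open>a\<close>) satisfies \<open>-(b u)\<^sup>* (b u) = -u a u = u r u \<ge> 0\<close>, which forces \<open>b u = 0\<close>
  and then \<open>u = 0\<close>.\<close>

theorem pos_spectrum_adj_mult:
  fixes b :: "'a::cstar_algebra"
  shows "pos_spectrum (adj b * b)"
proof -
  define a where "a = adj b * b"
  have aa: "adj a = a" by (simp add: a_def adj_mult adj_adj)
  obtain r where r: "pos_spectrum r" "r * r = a * a"
    and r_comm: "\<And>z. z * (a * a) = (a * a) * z \<Longrightarrow> z * r = r * z"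
    using pos_spectrum_sqrt[OF pos_spectrum_square[OF aa]] by blast
  have ar: "a * r = r * a" by (rule r_comm) (simp add: mult.assoc)
  obtain s where s: "pos_spectrum s" "s * s = r" and s_comm: "\<And>z. z * r = r * z \<Longrightarrow> z * s = s * z"
    using pos_spectrum_sqrt[OF r(1)] by blast
  define u where "u = r - a"
  have au: "adj u = u"
    using aa pos_spectrum_selfadjoint[OF r(1)] by (simp add: u_def adj_diff)
  have ur: "u * r = r * u" using ar by (simp add: u_def algebra_simps)
  have "u * (r + a) = 0" using r(2) ar by (simp add: u_def algebra_simps)
  then have ua: "u * a = - (u * r)" by (simp add: distrib_left add_eq_0_iff)
  moreover have "u * a = u * r - u * u" by (simp add: u_def algebra_simps)
  ultimately have uu: "u * u = 2 *\<^sub>R (u * r)" by (simp add: algebra_simps scaleR_2)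
  define x where "x = s * u"
  have us: "u * s = s * u" by (rule s_comm[OF ur])
  have ax: "adj x = x"
    using pos_spectrum_selfadjoint[OF s(1)] au us by (simp add: x_def adj_mult)
  have "adj (b * u) * (b * u) = u * a * u" using au by (simp add: a_def adj_mult mult.assoc)
  also have "\<dots> = - (x * x)"
    using ua us s(2) by (simp add: x_def) (metis mult.assoc ur)
  finally have yy: "adj (b * u) * (b * u) = - (x * x)" .
  then have "pos_spectrum (- (adj (b * u) * (b * u)))"
    using pos_spectrum_square[OF ax] by simp
  then have "b * u = 0" by (rule eq_0_if_pos_spectrum_neg_adj_mult)
  then have "x * x = 0" using yy by simp
  then have "s * u = 0" using selfadjoint_square_eq_0[OF ax] by (simp add: x_def)
  then have "r * u = 0" using s(2) by (metis mult.assoc mult_zero_right)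
  then have "u * u = 0" using uu ur by simp
  then have "u = 0" by (rule selfadjoint_square_eq_0[OF au])
  then show ?thesis using r(1) by (simp add: u_def a_def)
qed

lemma pos_spectrum_antisym:
  fixes a :: "'a::cstar_algebra"
  assumes "pos_spectrum a" "pos_spectrum (- a)"
  shows "a = 0"
  using norm_le_if_pos_spectrum_bounds[of 0 a] assms pos_spectrum_selfadjoint[OF assms(1)] by simp

lemma pos_spectrum_eq_if_commuting_squares_eq:
  fixes r k :: "'a::cstar_algebra"
  assumes pr: "pos_spectrum r" and pk: "pos_spectrum k" and rk: "r * k = k * r" and sq: "r * r = k * k"
  shows "r = k"
proof -
  define d where "d = r - k"
  have ad: "adj d = d"
    using pos_spectrum_selfadjoint[OF pr] pos_spectrum_selfadjoint[OF pk] by (simp add: d_def adj_diff)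
  have "d * r = r * d" and "d * k = k * d" using rk by (simp_all add: d_def algebra_simps)
  then have "r * (d * d) = (d * d) * r" and "k * (d * d) = (d * d) * k"
    by (metis mult.assoc)+
  then have pr': "pos_spectrum (r * (d * d))" and pk': "pos_spectrum (k * (d * d))"
    using pos_spectrum_mult_commute pos_spectrum_square[OF ad] pr pk by blast+
  have "(r + k) * d * d = 0" using sq rk by (simp add: d_def algebra_simps)
  then have "r * (d * d) + k * (d * d) = 0" by (simp add: distrib_right mult.assoc)
  then have "k * (d * d) = - (r * (d * d))" by (simp add: eq_neg_iff_add_eq_0 add.commute)
  then have "r * (d * d) = 0" and "k * (d * d) = 0"
    using pos_spectrum_antisym pr' pk' by auto
  then have "d * (d * d) = 0" by (simp add: d_def left_diff_distrib)
  then have "(d * d) * (d * d) = 0" by (metis mult.assoc mult_zero_right)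
  then have "d * d = 0" using selfadjoint_square_eq_0[of "d * d"] ad by (simp add: adj_mult)
  then show ?thesis using selfadjoint_square_eq_0[OF ad] by (simp add: d_def)
qed

lemma pos_spectrum_sqrt_unique:
  fixes r s :: "'a::cstar_algebra"
  assumes "pos_spectrum r" "pos_spectrum s" "r * r = s * s"
  shows "r = s"
proof -
  obtain t where t: "pos_spectrum t" "t * t = r * r"
    and t_comm: "\<And>z. z * (r * r) = (r * r) * z \<Longrightarrow> z * t = t * z"
    using pos_spectrum_sqrt[OF pos_spectrum_square[OF pos_spectrum_selfadjoint[OF assms(1)]]] by blast
  have "r * t = t * r" by (rule t_comm) (simp add: mult.assoc)
  then have "r = t" using assms(1) t pos_spectrum_eq_if_commuting_squares_eq by metis
  moreover have "s * t = t * s" by (rule t_comm) (simp add: assms(3) mult.assoc)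
  then have "s = t" using assms(2,3) t pos_spectrum_eq_if_commuting_squares_eq by metis
  ultimately show ?thesis by simp
qed

lemma positive_iff_pos_spectrum: "positive a \<longleftrightarrow> pos_spectrum (a::'a::cstar_algebra)"
proof
  show "positive a \<Longrightarrow> pos_spectrum a"
    unfolding positive_def using pos_spectrum_adj_mult by blast
next
  assume "pos_spectrum a"
  then obtain k where "pos_spectrum k" "k * k = a" using pos_spectrum_sqrt by blast
  then show "positive a" unfolding positive_def using pos_spectrum_selfadjoint by metis
qed

lemma csqrt_eq:
  fixes r a :: "'a::cstar_algebra"
  assumes "positive r" "r * r = a"
  shows "csqrt a = r"
  unfolding csqrt_def
proof (rule the_equality)
  show "positive r \<and> r * r = a" using assms by simp
  show "r' = r" if "positive r' \<and> r' * r' = a" for r'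
    using that assms pos_spectrum_sqrt_unique positive_iff_pos_spectrum by metis
qed

lemma
  fixes a :: "'a::cstar_algebra"
  assumes "positive a"
  shows positive_csqrt: "positive (csqrt a)"
    and csqrt_mult_self: "csqrt a * csqrt a = a"
    and csqrt_commute: "z * a = a * z \<Longrightarrow> z * csqrt a = csqrt a * z"
proof -
  obtain k where k: "pos_spectrum k" "k * k = a" "\<And>z. z * a = a * z \<Longrightarrow> z * k = k * z"
    using pos_spectrum_sqrt[OF assms[unfolded positive_iff_pos_spectrum]] by blast
  have "csqrt a = k" using csqrt_eq[of k a] k(1,2) by (simp add: positive_iff_pos_spectrum)
  then show "positive (csqrt a)" "csqrt a * csqrt a = a" "z * a = a * z \<Longrightarrow> z * csqrt a = csqrt a * z"
    using k(1,2) k(3)[of z] by (simp_all add: positive_iff_pos_spectrum)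
qed

definition is_mp_inverse :: "'a::cstar_algebra \<Rightarrow> 'a \<Rightarrow> bool" where
  "is_mp_inverse t x \<longleftrightarrow> t * x * t = t \<and> x * t * x = x \<and> adj (t * x) = t * x \<and> adj (x * t) = x * t"

lemma is_mp_inverse_unique:
  fixes t x y :: "'a::cstar_algebra"
  assumes "is_mp_inverse t x" "is_mp_inverse t y"
  shows "x = y"
proof -
  have x: "t * x * t = t" "x * t * x = x" "adj (t * x) = t * x" "adj (x * t) = x * t"
    and y: "t * y * t = t" "y * t * y = y" "adj (t * y) = t * y" "adj (y * t) = y * t"
    using assms by (simp_all add: is_mp_inverse_def)
  have "t * x = adj (t * y) * adj (t * x)" using x(1,3) y(1,3) by (metis mult.assoc)
  also have "\<dots> = adj (t * x * (t * y))" by (simp add: adj_mult)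
  also have "t * x * (t * y) = t * y" using x(1) by (metis mult.assoc)
  finally have tx: "t * x = t * y" using y(3) by simp
  have "x * t = adj (x * t) * adj (y * t)" using x(4) y(1,4) by (metis mult.assoc)
  also have "\<dots> = adj ((y * t) * (x * t))" by (simp add: adj_mult)
  also have "(y * t) * (x * t) = y * t" using x(1) by (metis mult.assoc)
  finally have xt: "x * t = y * t" using y(4) by simp
  have "x = y * t * x" using x(2) xt by simp
  also have "\<dots> = y" using tx y(2) by (simp add: mult.assoc)
  finally show ?thesis .
qed

lemma mp_inv_eq: "is_mp_inverse t x \<Longrightarrow> mp_inv t = x"
  unfolding mp_inv_def
  by (rule the_equality) (auto intro: is_mp_inverse_unique simp: is_mp_inverse_def)

text \<open>If \<open>K\<^sup>4 S = K\<^sup>2\<close> then \<open>w = K\<^sup>3 S - K\<close> is self-adjoint with \<open>w\<^sup>2 = 0\<close>, so \<open>K\<^sup>3 S = K\<close>.\<close>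

lemma is_mp_inverse_selfadjoint:
  fixes K S :: "'a::cstar_algebra"
  assumes aK: "adj K = K" and aS: "adj S = S" and KS: "K * S = S * K"
    and K4S: "K * K * (K * K) * S = K * K"
  shows "is_mp_inverse K (K * S)"
proof -
  have SKx: "S * (K * x) = K * (S * x)" for x using KS by (metis mult.assoc)
  have K4Sx: "K * (K * (K * (K * (S * x)))) = K * (K * x)" for x using K4S by (metis mult.assoc)
  define w where "w = K * K * K * S - K"
  have "adj w = w" using aK aS KS by (simp add: w_def adj_diff adj_mult SKx mult.assoc)
  moreover have "w * w = 0"
    by (simp add: w_def algebra_simps SKx K4Sx) (simp add: KS[symmetric] K4S[simplified mult.assoc])
  ultimately have K3S: "K * (K * (K * S)) = K"
    using selfadjoint_square_eq_0 by (fastforce simp: w_def mult.assoc)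
  then have "K * (K * (K * (S * x))) = K * x" for x by (metis mult.assoc)
  then show ?thesis
    unfolding is_mp_inverse_def
    using aK aS by (simp add: mult.assoc adj_mult SKx KS[symmetric] K3S)
qed

lemma ainv_eq:
  fixes x y :: "'a::cstar_algebra"
  assumes "x * y = 1" "y * x = 1"
  shows "ainv x = y"
  unfolding ainv_def
proof (rule the_equality)
  show "x * y = 1 \<and> y * x = 1" using assms by simp
  show "y' = y" if "x * y' = 1 \<and> y' * x = 1" for y'
    using that assms by (metis mult.assoc mult_1_left mult_1_right)
qed

section \<open>Conjugation by a partial isometry\<close>

definition commutant :: "'a::cstar_algebra \<Rightarrow> 'a set" where
  "commutant p = {z. z * p = p * z}"

lemma commutant_iff: "z \<in> commutant p \<longleftrightarrow> z * p = p * z"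
  by (simp add: commutant_def)

lemma commutant_sym: "x \<in> commutant p \<longleftrightarrow> p \<in> commutant x"
  by (auto simp: commutant_def)

lemma commutant_one [simp]: "1 \<in> commutant p"
  by (simp add: commutant_def)

lemma commutant_add: "x \<in> commutant p \<Longrightarrow> y \<in> commutant p \<Longrightarrow> x + y \<in> commutant p"
  by (simp add: commutant_def algebra_simps)

lemma commutant_diff: "x \<in> commutant p \<Longrightarrow> y \<in> commutant p \<Longrightarrow> x - y \<in> commutant p"
  by (simp add: commutant_def algebra_simps)

lemma commutant_mult: "x \<in> commutant p \<Longrightarrow> y \<in> commutant p \<Longrightarrow> x * y \<in> commutant p"
  by (simp add: commutant_def) (metis mult.assoc)

lemma commutant_adj: "adj p = p \<Longrightarrow> x \<in> commutant p \<Longrightarrow> adj x \<in> commutant p"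
  by (simp add: commutant_def) (metis adj_mult)

lemma commutant_inverse:
  "w \<in> commutant p \<Longrightarrow> w * g = 1 \<Longrightarrow> g * w = 1 \<Longrightarrow> g \<in> commutant p"
  by (simp add: commutant_def) (metis inverse_commute)

lemma commutant_csqrt: "positive a \<Longrightarrow> a \<in> commutant p \<Longrightarrow> csqrt a \<in> commutant p"
  by (simp add: commutant_def) (metis csqrt_commute)

lemma partial_isometry_mult_adj_mult:
  fixes U :: "'a::cstar_algebra"
  assumes "partial_isometry U"
  shows "U * (adj U * U) = U"
proof -
  define P where "P = adj U * U"
  have PP: "P * P = P" and aP: "adj P = P"
    using assms by (simp_all add: partial_isometry_def projection_def P_def)
  define w where "w = U - U * P"
  have "adj w * w = P - P * P - P * P + P * P * P"
    using aP by (simp add: w_def adj_diff adj_mult algebra_simps P_def mult.assoc)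
  then have "w = 0" using PP by (simp add: adj_mult_self_eq_0_iff)
  then show ?thesis by (simp add: w_def P_def)
qed

lemma adj_conj: "adj (U * x * adj U) = U * adj x * (adj U :: 'a::cstar_algebra)"
  by (simp add: adj_mult adj_adj mult.assoc)

lemma conj_add: "U * x * adj U + U * y * adj U = U * (x + y) * (adj U :: 'a::cstar_algebra)"
  by (simp add: algebra_simps)

lemma conj_mult:
  fixes U x y :: "'a::cstar_algebra"
  assumes "U * (adj U * U) = U" "x \<in> commutant (adj U * U)"
  shows "(U * x * adj U) * (U * y * adj U) = U * (x * y) * adj U"
proof -
  have "(U * x * adj U) * (U * y * adj U) = U * (x * (adj U * U)) * y * adj U"
    by (simp add: mult.assoc)
  also have "\<dots> = (U * (adj U * U)) * x * y * adj U"
    using assms(2) by (simp add: commutant_def mult.assoc)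
  finally show ?thesis using assms(1) by (simp add: mult.assoc)
qed

lemma positive_conj:
  fixes U a :: "'a::cstar_algebra"
  assumes "positive a"
  shows "positive (U * a * adj U)"
proof -
  obtain b where "a = adj b * b" using assms positive_def by blast
  then have "U * a * adj U = adj (b * adj U) * (b * adj U)" by (simp add: adj_mult adj_adj mult.assoc)
  then show ?thesis unfolding positive_def by blast
qed

lemma csqrt_conj:
  fixes U a :: "'a::cstar_algebra"
  assumes "U * (adj U * U) = U" "positive a" "a \<in> commutant (adj U * U)"
  shows "csqrt (U * a * adj U) = U * csqrt a * adj U"
proof (rule csqrt_eq)
  show "positive (U * csqrt a * adj U)"
    by (rule positive_conj[OF positive_csqrt[OF assms(2)]])
  show "(U * csqrt a * adj U) * (U * csqrt a * adj U) = U * a * adj U"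
    using conj_mult[OF assms(1) commutant_csqrt[OF assms(2,3)]] csqrt_mult_self[OF assms(2)] by simp
qed

lemma positive_cabs: "positive (cabs (x::'a::cstar_algebra))"
  unfolding cabs_def using positive_csqrt positive_def by blast

lemma cabs_commutant:
  fixes p x :: "'a::cstar_algebra"
  assumes "adj p = p" "x \<in> commutant p"
  shows "cabs x \<in> commutant p"
  unfolding cabs_def
  by (rule commutant_csqrt) (use assms in \<open>auto simp: positive_def intro: commutant_mult commutant_adj\<close>)

lemma cabs_conj:
  fixes U x :: "'a::cstar_algebra"
  assumes UP: "U * (adj U * U) = U" and x: "x \<in> commutant (adj U * U)"
  shows "cabs (U * x * adj U) = U * cabs x * adj U"
proof -
  have "adj (adj U * U) = adj U * U" by (simp add: adj_mult adj_adj)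
  then have "adj x * x \<in> commutant (adj U * U)" using x by (simp add: commutant_adj commutant_mult)
  moreover have "adj (U * x * adj U) * (U * x * adj U) = U * (adj x * x) * adj U"
    using conj_mult[OF UP commutant_adj[OF \<open>adj (adj U * U) = adj U * U\<close> x]] by (simp add: adj_conj)
  ultimately show ?thesis
    unfolding cabs_def using csqrt_conj[OF UP] positive_def by auto
qed

lemma mp_inv_conj:
  fixes U t x :: "'a::cstar_algebra"
  assumes UP: "U * (adj U * U) = U" and tx: "is_mp_inverse t x"
    and t: "t \<in> commutant (adj U * U)" and x: "x \<in> commutant (adj U * U)"
  shows "mp_inv (U * t * adj U) = U * mp_inv t * adj U"
proof -
  have tx': "(U * t * adj U) * (U * x * adj U) = U * (t * x) * adj U"
    and xt': "(U * x * adj U) * (U * t * adj U) = U * (x * t) * adj U"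
    using conj_mult[OF UP t] conj_mult[OF UP x] by simp_all
  have "is_mp_inverse (U * t * adj U) (U * x * adj U)"
    using tx unfolding is_mp_inverse_def tx' xt' adj_conj
    by (simp add: conj_mult[OF UP commutant_mult[OF t x]] conj_mult[OF UP commutant_mult[OF x t]])
  then show ?thesis using mp_inv_eq[OF tx] mp_inv_eq by simp
qed

lemma ainv_conj_add_one:
  fixes U t :: "'a::cstar_algebra"
  assumes UP: "U * (adj U * U) = U" and t: "t \<in> commutant (adj U * U)" and inv: "invertible (t + 1)"
  shows "ainv (U * t * adj U + 1) = 1 + U * (ainv (t + 1) - 1) * adj U"
proof -
  obtain v where v: "(t + 1) * v = 1" "v * (t + 1) = 1" using inv invertible_def by blast
  have "v \<in> commutant (adj U * U)"
    by (rule commutant_inverse[OF commutant_add[OF t commutant_one] v])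
  then have v1: "v - 1 \<in> commutant (adj U * U)" by (simp add: commutant_diff)
  have "ainv (U * t * adj U + 1) = 1 + U * (v - 1) * adj U"
  proof (rule ainv_eq)
    have "(U * t * adj U + 1) * (1 + U * (v - 1) * adj U)
        = 1 + U * (v - 1 + t + t * (v - 1)) * adj U"
      using conj_mult[OF UP t, of "v - 1"] by (simp add: algebra_simps)
    also have "v - 1 + t + t * (v - 1) = 0" using v(1) by (simp add: algebra_simps)
    finally show "(U * t * adj U + 1) * (1 + U * (v - 1) * adj U) = 1" by simp
    have "(1 + U * (v - 1) * adj U) * (U * t * adj U + 1)
        = 1 + U * (v - 1 + t + (v - 1) * t) * adj U"
      using conj_mult[OF UP v1, of t] by (simp add: algebra_simps)
    also have "v - 1 + t + (v - 1) * t = 0" using v(2) by (simp add: algebra_simps)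
    finally show "(1 + U * (v - 1) * adj U) * (U * t * adj U + 1) = 1" by simp
  qed
  then show ?thesis using ainv_eq[OF v] by simp
qed

section \<open>The matched projection\<close>

text \<open>For an idempotent \<open>Q\<close> put \<open>R = Q + Q\<^sup>* - 1\<close>. Then \<open>R\<^sup>2 = 1 + (Q\<^sup>* - Q)\<^sup>*(Q\<^sup>* - Q)\<close> is invertible and
  \<open>R\<^sup>2 Q = Q Q\<^sup>* Q = Q R\<^sup>2\<close>, so \<open>S = (R\<^sup>2)\<^sup>-\<^sup>1\<close> and \<open>A = Q Q\<^sup>*\<close> satisfy \<open>A\<^sup>2 S = S R\<^sup>2 A = A\<close>.\<close>

lemma idempotent_mult_adj_inverse_on_range:
  fixes Q :: "'a::cstar_algebra"
  assumes "idempotent Q"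
  obtains S where "adj S = S" "S \<in> commutant Q" "S \<in> commutant (adj Q)"
    and "Q * adj Q * (Q * adj Q) * S = Q * adj Q"
    and "\<And>p. Q \<in> commutant p \<Longrightarrow> adj Q \<in> commutant p \<Longrightarrow> S \<in> commutant p"
proof -
  have QQ: "Q * Q = Q" using assms idempotent_def by blast
  then have Q'Q': "adj Q * adj Q = adj Q" by (metis adj_mult)
  have QQx: "Q * (Q * x) = Q * x" and Q'Q'x: "adj Q * (adj Q * x) = adj Q * x" for x
    using QQ Q'Q' by (metis mult.assoc)+
  define R where "R = Q + adj Q - 1"
  have aR: "adj R = R" by (simp add: R_def adj_diff adj_add adj_adj add.commute)
  have "R * R = 1 + adj (adj Q - Q) * (adj Q - Q)"
    using QQ Q'Q' by (simp add: R_def adj_diff adj_adj algebra_simps)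
  then obtain S where S: "R * R * S = 1" "S * (R * R) = 1"
    using invertible_one_plus_pos_spectrum[OF pos_spectrum_adj_mult] invertible_def by metis
  have aS: "adj S = S" by (rule inverse_selfadjoint[OF S]) (simp add: adj_mult aR)
  have RRQ: "R * R * Q = Q * adj Q * Q" and "Q * (R * R) = Q * adj Q * Q"
    and "R * R * adj Q = adj Q * Q * adj Q" and "adj Q * (R * R) = adj Q * Q * adj Q"
    by (simp_all add: R_def algebra_simps QQ Q'Q' QQx Q'Q'x)
  then have "R * R \<in> commutant Q" and "R * R \<in> commutant (adj Q)"
    by (simp_all add: commutant_iff)
  then have SQ: "S \<in> commutant Q" and SQ': "S \<in> commutant (adj Q)"
    using commutant_inverse S by blast+
  have AS: "Q * adj Q \<in> commutant S"
    using SQ SQ' by (simp add: commutant_mult commutant_sym[of S])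
  have "Q * adj Q * (Q * adj Q) = R * R * (Q * adj Q)" using RRQ by (metis mult.assoc)
  then have "Q * adj Q * (Q * adj Q) * S = S * (R * R) * (Q * adj Q)"
    using commutant_mult[OF AS AS] by (simp add: commutant_iff mult.assoc)
  then have "Q * adj Q * (Q * adj Q) * S = Q * adj Q" using S(2) by simp
  moreover have "S \<in> commutant p" if "Q \<in> commutant p" "adj Q \<in> commutant p" for p
  proof -
    have "R * R \<in> commutant p"
      using that by (simp add: R_def commutant_mult commutant_add commutant_diff)
    then show ?thesis using commutant_inverse S by blast
  qed
  ultimately show ?thesis using that aS SQ SQ' by blast
qed

lemma idempotent_cabs_adj_mp_inverse:
  fixes Q :: "'a::cstar_algebra"
  assumes "idempotent Q"
  obtains X where "is_mp_inverse (cabs (adj Q)) X"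
    and "\<And>p. Q \<in> commutant p \<Longrightarrow> adj Q \<in> commutant p \<Longrightarrow> X \<in> commutant p"
proof -
  obtain S where aS: "adj S = S" and SQ: "S \<in> commutant Q" "S \<in> commutant (adj Q)"
    and AAS: "Q * adj Q * (Q * adj Q) * S = Q * adj Q"
    and S_comm: "\<And>p. Q \<in> commutant p \<Longrightarrow> adj Q \<in> commutant p \<Longrightarrow> S \<in> commutant p"
    using idempotent_mult_adj_inverse_on_range[OF assms] by blast
  define K where "K = cabs (adj Q)"
  have pA: "positive (Q * adj Q)" unfolding positive_def by (rule exI[where x="adj Q"]) (simp add: adj_adj)
  have K: "K = csqrt (Q * adj Q)" by (simp add: K_def cabs_def adj_adj)
  have aK: "adj K = K"
    using positive_cabs[of "adj Q"] by (simp add: K_def positive_iff_pos_spectrum pos_spectrum_selfadjoint)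
  have "Q * adj Q \<in> commutant S" using SQ by (simp add: commutant_mult commutant_sym[of S])
  then have KS: "K * S = S * K" using commutant_csqrt[OF pA] by (simp add: K commutant_iff)
  have "is_mp_inverse K (K * S)"
    using AAS csqrt_mult_self[OF pA] by (intro is_mp_inverse_selfadjoint aK aS KS) (simp add: K)
  moreover have "K * S \<in> commutant p" if "Q \<in> commutant p" "adj Q \<in> commutant p" for p
    using that S_comm commutant_csqrt[OF pA] by (simp add: K commutant_mult)
  ultimately show ?thesis using that K_def by blast
qed

lemma matched_proj_conj:
  fixes U Q X :: "'a::cstar_algebra"
  assumes UP: "U * (adj U * U) = U" and Q: "Q \<in> commutant (adj U * U)"
    and X: "is_mp_inverse (cabs (adj Q)) X" "X \<in> commutant (adj U * U)"
  shows "matched_proj (U * Q * adj U) = U * matched_proj Q * adj U"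
proof -
  let ?P = "adj U * U"
  define K where "K = cabs (adj Q)"
  have aP: "adj ?P = ?P" by (simp add: adj_mult adj_adj)
  have Q': "adj Q \<in> commutant ?P" using Q by (rule commutant_adj[OF aP])
  have KP: "K \<in> commutant ?P" unfolding K_def by (rule cabs_commutant[OF aP Q'])
  have cabs: "cabs (adj (U * Q * adj U)) = U * K * adj U"
    unfolding adj_conj K_def by (rule cabs_conj[OF UP Q'])
  have mp: "mp_inv (U * K * adj U) = U * X * adj U"
    using mp_inv_conj[OF UP X(1)[folded K_def] KP X(2)] mp_inv_eq[OF X(1)] by (simp add: K_def)
  have "invertible (K + 1)"
    using invertible_one_plus_pos_spectrum[of K] positive_cabs[of "adj Q"]
    by (simp add: K_def positive_iff_pos_spectrum add.commute)
  then obtain V where V: "(K + 1) * V = 1" "V * (K + 1) = 1" and ainv: "ainv (K + 1) = V"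
    using ainv_eq invertible_def by metis
  have VP: "V \<in> commutant ?P" by (rule commutant_inverse[OF commutant_add[OF KP commutant_one] V])
  have inv: "ainv (U * K * adj U + 1) = 1 + U * (V - 1) * adj U"
    using ainv_conj_add_one[OF UP KP \<open>invertible (K + 1)\<close>] ainv by simp
  have XV: "(U * X * adj U) * (1 + U * (V - 1) * adj U) = U * (X * V) * adj U"
    using conj_mult[OF UP X(2), of "V - 1"] by (simp add: algebra_simps)
  have KQ': "K + adj Q \<in> commutant ?P" by (rule commutant_add[OF KP Q'])
  have "matched_proj (U * Q * adj U)
      = (1/2::real) *\<^sub>R (U * (K + adj Q) * adj U * (U * X * adj U) * (1 + U * (V - 1) * adj U)
          * (U * (K + Q) * adj U))"
    unfolding matched_proj_def cabs mp inv unfolding adj_conj conj_add ..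
  also have "\<dots> = (1/2::real) *\<^sub>R (U * (K + adj Q) * adj U * ((U * X * adj U) * (1 + U * (V - 1) * adj U))
          * (U * (K + Q) * adj U))"
    by (simp only: mult.assoc)
  also have "\<dots> = (1/2::real) *\<^sub>R (U * ((K + adj Q) * (X * V) * (K + Q)) * adj U)"
    unfolding XV
    using conj_mult[OF UP KQ'] conj_mult[OF UP commutant_mult[OF KQ' commutant_mult[OF X(2) VP]]]
    by simp
  also have "\<dots> = U * matched_proj Q * adj U"
    unfolding matched_proj_def K_def[symmetric] mp_inv_eq[OF X(1), folded K_def] ainv
    by (simp add: mult.assoc)
  finally show ?thesis .
qed

theorem lemma3p8:
  fixes Q U :: "'a::cstar_algebra"
  assumes "idempotent Q" and "partial_isometry U"
    and "adj U * U * Q = Q * adj U * U"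
  shows "idempotent (U * Q * adj U) \<and>
         matched_proj (U * Q * adj U) = U * matched_proj Q * adj U"
proof
  have UP: "U * (adj U * U) = U" by (rule partial_isometry_mult_adj_mult[OF assms(2)])
  have Q: "Q \<in> commutant (adj U * U)" using assms(3) by (simp add: commutant_iff mult.assoc)
  have "adj (adj U * U) = adj U * U" by (simp add: adj_mult adj_adj)
  then have Q': "adj Q \<in> commutant (adj U * U)" using Q by (rule commutant_adj)
  show "idempotent (U * Q * adj U)"
    using conj_mult[OF UP Q, of Q] assms(1) by (simp add: idempotent_def)
  obtain X where "is_mp_inverse (cabs (adj Q)) X" "X \<in> commutant (adj U * U)"
    using idempotent_cabs_adj_mp_inverse[OF assms(1)] Q Q' by metis
  then show "matched_proj (U * Q * adj U) = U * matched_proj Q * adj U"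
    by (rule matched_proj_conj[OF UP Q])
qed

end
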